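(* Suppose at least one class uses an imitative via comparison revision protocol and every other class uses an excess payoff or pairwise comparison revision protocol. Let $\mu^\star$ be a rest point of the evolutionary dynamics (E) which is not an MSNE. Then there exists a class $d\in[C]$ using an imitative via comparison protocol such that every $v\in\arg\max_{j\in\mathcal U^d_D}F^d_j(\mu^\star)$ satisfies $\mu^{d\star}[\mathcal S^d,v]=0$ and $G^d_v(\mu^\star)>0$, where $G^d_v(\mu)=\sum_{u'\in\mathcal U^d_D}\frac{\mu^d[\mathcal S^d,u']}{m^d}\big(r^d_{u'v}(F^d(\mu),\mu^d[\mathcal S^d,\cdot])-r^d_{vu'}(F^d(\mu),\mu^d[\mathcal S^d,\cdot])\big)$.
   Context: Setting. There are $C$ classes of players, $[C]=\{1,\dots,C\}$. For each class $c\in[C]$: $\mathcal S^c$ is a finite state set with $p^c$ elements; for each $s\in\mathcal S^c$, $\mathcal A^c(s)$ is a nonempty finite action set; $\phi^c(\cdot\mid s,a)$ is a probability distribution on $\mathcal S^c$ for each $s\in\mathcal S^c$, $a\in\mathcal A^c(s)$; $\mathcal U^c_D$ is a finite set of $n^c$ deterministic stationary policies, each $u\in\mathcal U^c_D$ assigning to every $s$ a point mass $u(\cdot\mid s)$ on some action of $\mathcal A^c(s)$; $m^c>0$ is the mass of class $c$; $R^c_d>0$ is the state-transition rate. Let $n=\sum_c n^c$. For $u\in\mathcal U^c_D$ put $\phi^{c,u}(s\mid s')=\sum_{a'\in\mathcal A^c(s')}\phi^c(s\mid s',a')u(a'\mid s')$; standing assumption: the Markov chain on $\mathcal S^c$ with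 kernel $\phi^{c,u}$ has a unique recurrent communicating class, hence a unique stationary distribution $\eta^{c,u}$. The population state is $\mu=(\mu^c)_{c\in[C]}\in X:=\prod_c X^c$, where $X^c=\{\mu^c\in\mathbb R_{\ge0}^{\mathcal S^c\times\mathcal U^c_D}:\sum_{s,u}\mu^c[s,u]=m^c\}$; write $\mu^c[\mathcal S^c,u]:=\sum_{s\in\mathcal S^c}\mu^c[s,u]$ and $\mu^c[\mathcal S^c,\cdot]\in\mathbb R^{n^c}_{\ge0}$ for the vector of these. A payoff map $F=(F^c)_{c\in[C]}$ is given, with $F^c$ continuously differentiable on an open neighborhood of $X$ and valued in $\mathbb R^{\mathcal U^c_D}$ ($F^c_u(\mu)$ is the payoff of policy $u$ for class $c$). Each class has a revision protocol $\rho^c=(\rho^c_{uv})_{u,v\in\mathcal U^c_D}$, a Lipschitz continuous map $\mathbb R^{n^c}\times\mathbb R^{n^c}_{\ge0}\to\mathbb R^{n^c\times n^c}_{\ge0}$ whose first argument is a payoff vector and second a policy distribution. The evolutionary dynamics (E) are the ODE on $X$: for all $c\in[C]$, $s\in\mathcal S^c$, $u\in\mathcal U^c_D$, $\dot\mu^c[s,u]=f^{c,d}_{s,u}(\mu)+f^{c,r}_{s,u}(\mu)$, where $f^{c,d}_{s,u}(\mu)=R^c_d\sum_{s'\in\mathcal S^c}\sum_{a'\in\mathcal A^c(s')}\phi^c(s\mid s',a')u(a'\mid s')\mu^c[s',u]-R^c_d\mu^c[s,u]$ and $f^{c,r}_{s,u}(\mu)=\sum_{u'\in\mathcal U^c_D}\mu^c[s,u']\rho^c_{u'u}(F^c(\mu),\mu^c[\mathcal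 S^c,\cdot])-\mu^c[s,u]\sum_{u'\in\mathcal U^c_D}\rho^c_{uu'}(F^c(\mu),\mu^c[\mathcal S^c,\cdot])$. Solutions from $X$ exist, are unique and remain in $X$. A state $\mu\in X$ is a mixed stationary Nash equilibrium (MSNE) if for every $c\in[C]$: (a) for all $u\in\mathcal U^c_D$, $\mu^c[\mathcal S^c,u]>0\Rightarrow F^c_u(\mu)\ge F^c_v(\mu)$ for all $v\in\mathcal U^c_D$; and (b) $f^{c,d}_{s,u}(\mu)=0$ for all $s\in\mathcal S^c,u\in\mathcal U^c_D$. $\mathrm{MSNE}(F,\phi)$ denotes the set of MSNE. Protocol families (for class $c$; $\pi\in\mathbb R^{n^c}$ a payoff vector, $x\in\mathbb R^{n^c}_{\ge0}$ a policy distribution of total mass $m^c$): - imitative: $\rho^c_{uv}(\pi,x)=\frac{x_v}{m^c}r^c_{uv}(\pi,x)$ with $r^c\ge0$ Lipschitz and monotone net conditional imitation rates: for all $u,v,w$, $\pi_v\ge\pi_u\iff r^c_{wv}(\pi,x)-r^c_{vw}(\pi,x)\ge r^c_{wu}(\pi,x)-r^c_{uw}(\pi,x)$; - imitative via comparison: an imitative protocol with $r^c_{uv}(\pi,x)=\varphi^c(\pi_v-\pi_u)$, where $\varphi^c$ is Lipschitz, $\varphi^c(d)=0$ for $d\le0$ and $\varphi^c(d)>0$ for $d>0$; - excess payoff: $\rho^c_{uv}(\pi,x)=\tau^c_v(\hat\pi)$ with $\hat\pi_v=\pi_v-\frac1{m^c}\sum_w x_w\pi_w$, $\tau^c:\mathbb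 R^{n^c}\to\mathbb R^{n^c}_{\ge0}$ Lipschitz and $\tau^c(\hat\pi)^\top\hat\pi>0$ whenever $\hat\pi$ has a positive component; it is separable if $\tau^c_v(\hat\pi)=\tau^c_v(\hat\pi_v)$ depends only on $\hat\pi_v$, with $\tau^c_v(d)>0\iff d>0$; - pairwise comparison: $\rho^c_{uv}(\pi,x)=\rho^c_{uv}(\pi)$ independent of $x$, Lipschitz, with $\rho^c_{uv}(\pi)>0\iff\pi_v>\pi_u$; it is impartial if $\rho^c_{uv}(\pi)=\varphi^c_v(\pi_v-\pi_u)$ for some functions $\varphi^c_v$. *)

theory Defs
  imports "HOL-Analysis.Analysis"
begin

text \<open>
All classes draw their states from a common
finite type 's, their actions from a finite type 'a and their (names of) policies from a
finite type 'u; class c uses the state set S c, action sets A c s and the policy set U c.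
A population state is a vector mu :: real^('c::finite \<times> 's::finite \<times> 'u::finite); the coordinate
mu $ (c,s,u) is mu^c[s,u].  Coordinates (c,s,u) with s outside S c or u outside U c are
required to vanish in X (they are padding only).  A deterministic policy u of class c is
given by pol c u s, the action it chooses in state s.
\<close>

definition pmass :: "('c \<Rightarrow> 'u \<Rightarrow> 's \<Rightarrow> 'a) \<Rightarrow> 'c \<Rightarrow> 'u \<Rightarrow> 's \<Rightarrow> 'a \<Rightarrow> real" where
  "pmass pol c u s a = (if a = pol c u s then 1 else 0)"

text \<open>phi c s' a s = phi^c(s | s', a).  Kernel of policy u: phi^{c,u}(s | s').\<close>
definition kernel ::
  "('c \<Rightarrow> 's \<Rightarrow> 'a set) \<Rightarrow> ('c \<Rightarrow> 's \<Rightarrow> 'a \<Rightarrow> 's \<Rightarrow> real) \<Rightarrow> ('c \<Rightarrow> 'u \<Rightarrow> 's \<Rightarrow> 'a)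
    \<Rightarrow> 'c \<Rightarrow> 'u \<Rightarrow> 's \<Rightarrow> 's \<Rightarrow> real" where
  "kernel A phi pol c u s' s = (\<Sum>a'\<in>A c s'. phi c s' a' s * pmass pol c u s' a')"

definition reach :: "'s set \<Rightarrow> ('s \<Rightarrow> 's \<Rightarrow> real) \<Rightarrow> 's \<Rightarrow> 's \<Rightarrow> bool" where
  "reach S P x y \<longleftrightarrow> (x, y) \<in> {(a, b). a \<in> S \<and> b \<in> S \<and> P a b > 0}\<^sup>*"

definition recurrent :: "'s set \<Rightarrow> ('s \<Rightarrow> 's \<Rightarrow> real) \<Rightarrow> 's \<Rightarrow> bool" where
  "recurrent S P x \<longleftrightarrow> x \<in> S \<and> (\<forall>y\<in>S. reach S P x y \<longrightarrow> reach S P y x)"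

definition unique_recurrent_class :: "'s set \<Rightarrow> ('s \<Rightarrow> 's \<Rightarrow> real) \<Rightarrow> bool" where
  "unique_recurrent_class S P \<longleftrightarrow>
     (\<exists>x. recurrent S P x) \<and> (\<forall>x y. recurrent S P x \<and> recurrent S P y \<longrightarrow> reach S P x y)"

definition popX :: "('c \<Rightarrow> 's set) \<Rightarrow> ('c \<Rightarrow> 'u set) \<Rightarrow> ('c \<Rightarrow> real)
    \<Rightarrow> (real^('c::finite \<times> 's::finite \<times> 'u::finite)) set" where
  "popX S U m = {mu. (\<forall>c s u. (s \<in> S c \<and> u \<in> U c \<longrightarrow> mu $ (c, s, u) \<ge> 0) \<and>
                              (\<not> (s \<in> S c \<and> u \<in> U c) \<longrightarrow> mu $ (c, s, u) = 0)) \<and>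
                    (\<forall>c. (\<Sum>s\<in>S c. \<Sum>u\<in>U c. mu $ (c, s, u)) = m c)}"

definition xdist :: "('c \<Rightarrow> 's set) \<Rightarrow> real^('c::finite \<times> 's::finite \<times> 'u::finite) \<Rightarrow> 'c \<Rightarrow> 'u \<Rightarrow> real" where
  "xdist S mu c u = (\<Sum>s\<in>S c. mu $ (c, s, u))"

definition f_d ::
  "('c \<Rightarrow> 's set) \<Rightarrow> ('c \<Rightarrow> 's \<Rightarrow> 'a set) \<Rightarrow> ('c \<Rightarrow> 's \<Rightarrow> 'a \<Rightarrow> 's \<Rightarrow> real)
   \<Rightarrow> ('c \<Rightarrow> 'u \<Rightarrow> 's \<Rightarrow> 'a) \<Rightarrow> ('c \<Rightarrow> real) \<Rightarrow> real^('c::finite \<times> 's::finite \<times> 'u::finite) \<Rightarrow> 'c \<Rightarrow> 's \<Rightarrow> 'u \<Rightarrow> real" where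
  "f_d S A phi pol Rd mu c s u =
     Rd c * (\<Sum>s'\<in>S c. \<Sum>a'\<in>A c s'. phi c s' a' s * pmass pol c u s' a' * mu $ (c, s', u))
     - Rd c * mu $ (c, s, u)"

text \<open>rho c pi x u v = rho^c_{uv}(pi, x); F c mu v = F^c_v(mu).\<close>
definition f_r ::
  "('c \<Rightarrow> 's set) \<Rightarrow> ('c \<Rightarrow> 'u set) \<Rightarrow> ('c \<Rightarrow> real^('c::finite \<times> 's::finite \<times> 'u::finite) \<Rightarrow> 'u \<Rightarrow> real)
   \<Rightarrow> ('c \<Rightarrow> ('u \<Rightarrow> real) \<Rightarrow> ('u \<Rightarrow> real) \<Rightarrow> 'u \<Rightarrow> 'u \<Rightarrow> real)
   \<Rightarrow> real^('c::finite \<times> 's::finite \<times> 'u::finite) \<Rightarrow> 'c \<Rightarrow> 's \<Rightarrow> 'u \<Rightarrow> real" where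
  "f_r S U F rho mu c s u =
     (\<Sum>u'\<in>U c. mu $ (c, s, u') * rho c (F c mu) (xdist S mu c) u' u)
     - mu $ (c, s, u) * (\<Sum>u'\<in>U c. rho c (F c mu) (xdist S mu c) u u')"

definition rest_point where
  "rest_point S U A phi pol m Rd F rho mu \<longleftrightarrow> mu \<in> popX S U m \<and>
     (\<forall>c. \<forall>s\<in>S c. \<forall>u\<in>U c. f_d S A phi pol Rd mu c s u + f_r S U F rho mu c s u = 0)"

definition MSNE where
  "MSNE S U A phi pol m Rd F mu \<longleftrightarrow> mu \<in> popX S U m \<and>
     (\<forall>c. (\<forall>u\<in>U c. xdist S mu c u > 0 \<longrightarrow> (\<forall>v\<in>U c. F c mu u \<ge> F c mu v)) \<and>
          (\<forall>s\<in>S c. \<forall>u\<in>U c. f_d S A phi pol Rd mu c s u = 0))"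

definition nonneg_on :: "'u set \<Rightarrow> ('u \<Rightarrow> real) \<Rightarrow> bool" where
  "nonneg_on U x \<longleftrightarrow> (\<forall>w\<in>U. x w \<ge> 0)"

definition protocol :: "'u set \<Rightarrow> (('u \<Rightarrow> real) \<Rightarrow> ('u \<Rightarrow> real) \<Rightarrow> 'u \<Rightarrow> 'u \<Rightarrow> real) \<Rightarrow> bool" where
  "protocol U rho \<longleftrightarrow>
     (\<exists>L. \<forall>p p' x x'. nonneg_on U x \<and> nonneg_on U x' \<longrightarrow>
         (\<forall>u\<in>U. \<forall>v\<in>U. \<bar>rho p x u v - rho p' x' u v\<bar>
            \<le> L * ((\<Sum>w\<in>U. \<bar>p w - p' w\<bar>) + (\<Sum>w\<in>U. \<bar>x w - x' w\<bar>)))) \<and>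
     (\<forall>p x. nonneg_on U x \<longrightarrow> (\<forall>u\<in>U. \<forall>v\<in>U. rho p x u v \<ge> 0))"

definition policy_dist :: "'u set \<Rightarrow> real \<Rightarrow> ('u \<Rightarrow> real) \<Rightarrow> bool" where
  "policy_dist U m x \<longleftrightarrow> nonneg_on U x \<and> (\<Sum>w\<in>U. x w) = m"

definition r_comp :: "(real \<Rightarrow> real) \<Rightarrow> ('u \<Rightarrow> real) \<Rightarrow> ('u \<Rightarrow> real) \<Rightarrow> 'u \<Rightarrow> 'u \<Rightarrow> real" where
  "r_comp varphi p x u v = varphi (p v - p u)"

definition imitative_via_comparison ::
  "'u set \<Rightarrow> real \<Rightarrow> (('u \<Rightarrow> real) \<Rightarrow> ('u \<Rightarrow> real) \<Rightarrow> 'u \<Rightarrow> 'u \<Rightarrow> real) \<Rightarrow> (real \<Rightarrow> real) \<Rightarrow> bool" where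
  "imitative_via_comparison U m rho varphi \<longleftrightarrow>
     (\<exists>L. \<forall>a b. \<bar>varphi a - varphi b\<bar> \<le> L * \<bar>a - b\<bar>) \<and>
     (\<forall>d. d \<le> 0 \<longrightarrow> varphi d = 0) \<and> (\<forall>d. d > 0 \<longrightarrow> varphi d > 0) \<and>
     (\<forall>p x. nonneg_on U x \<longrightarrow> (\<forall>u\<in>U. \<forall>w\<in>U. \<forall>v\<in>U.
        (p v \<ge> p u \<longleftrightarrow>
          r_comp varphi p x w v - r_comp varphi p x v w \<ge> r_comp varphi p x w u - r_comp varphi p x u w))) \<and>
     (\<forall>p x. policy_dist U m x \<longrightarrow>
        (\<forall>u\<in>U. \<forall>v\<in>U. rho p x u v = x v / m * r_comp varphi p x u v))"

definition excess_payoff ::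
  "'u set \<Rightarrow> real \<Rightarrow> (('u \<Rightarrow> real) \<Rightarrow> ('u \<Rightarrow> real) \<Rightarrow> 'u \<Rightarrow> 'u \<Rightarrow> real) \<Rightarrow> bool" where
  "excess_payoff U m rho \<longleftrightarrow>
     (\<exists>tau :: ('u \<Rightarrow> real) \<Rightarrow> 'u \<Rightarrow> real.
        (\<exists>L. \<forall>y y'. \<forall>v\<in>U. \<bar>tau y v - tau y' v\<bar> \<le> L * (\<Sum>w\<in>U. \<bar>y w - y' w\<bar>)) \<and>
        (\<forall>y. \<forall>v\<in>U. tau y v \<ge> 0) \<and>
        (\<forall>y. (\<exists>v\<in>U. y v > 0) \<longrightarrow> (\<Sum>v\<in>U. tau y v * y v) > 0) \<and>
        (\<forall>p x. policy_dist U m x \<longrightarrow>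
           (\<forall>u\<in>U. \<forall>v\<in>U. rho p x u v = tau (\<lambda>w. p w - (1 / m) * (\<Sum>w'\<in>U. x w' * p w')) v)))"

definition pairwise_comparison ::
  "'u set \<Rightarrow> (('u \<Rightarrow> real) \<Rightarrow> ('u \<Rightarrow> real) \<Rightarrow> 'u \<Rightarrow> 'u \<Rightarrow> real) \<Rightarrow> bool" where
  "pairwise_comparison U rho \<longleftrightarrow>
     (\<forall>p x x'. nonneg_on U x \<and> nonneg_on U x' \<longrightarrow> (\<forall>u\<in>U. \<forall>v\<in>U. rho p x u v = rho p x' u v)) \<and>
     (\<forall>p x. nonneg_on U x \<longrightarrow> (\<forall>u\<in>U. \<forall>v\<in>U. rho p x u v > 0 \<longleftrightarrow> p v > p u))"

definition G_imit ::
  "('c \<Rightarrow> 's set) \<Rightarrow> ('c \<Rightarrow> 'u set) \<Rightarrow> ('c \<Rightarrow> real) \<Rightarrow> ('c \<Rightarrow> real^('c::finite \<times> 's::finite \<times> 'u::finite) \<Rightarrow> 'u \<Rightarrow> real)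
   \<Rightarrow> (real \<Rightarrow> real) \<Rightarrow> 'c \<Rightarrow> 'u \<Rightarrow> real^('c::finite \<times> 's::finite \<times> 'u::finite) \<Rightarrow> real" where
  "G_imit S U m F varphi d v mu =
     (\<Sum>u'\<in>U d. xdist S mu d u' / m d *
        (r_comp varphi (F d mu) (xdist S mu d) u' v - r_comp varphi (F d mu) (xdist S mu d) v u'))"

end

theory Submission
  imports Defs
begin

(*
  Summing the rest-point equations over states cancels the Markov part (each policy's kernel
  preserves mass), so the policy distribution x of every class is a rest point of its own
  revision dynamics.  Under a pairwise comparison protocol this puts x on best responses: the
  worst used policy would lose mass without gaining any.  Under an excess payoff protocol the
  rates are proportional to x, hence uncorrelated with the excess payoffs, so by positive
  correlation no excess payoff is positive; Lipschitz continuity of the rates then shows that at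
  most one policy attracts revising agents, and the revision flow vanishes state by state.  So
  every non-imitative class satisfies the MSNE conditions, and since mu is not an MSNE some
  imitative class d does not.  In d no best response v is used: otherwise nobody leaves v, yet v
  attracts every user of a worse policy, forcing all used policies to be best responses.  Hence
  some used policy is strictly worse than v, and it makes the net imitation gain of v positive.
*)

definition revision_flow :: "'u set \<Rightarrow> ('u \<Rightarrow> real) \<Rightarrow> ('u \<Rightarrow> 'u \<Rightarrow> real) \<Rightarrow> 'u \<Rightarrow> real" where
  "revision_flow U z r u = (\<Sum>u'\<in>U. z u' * r u' u) - z u * (\<Sum>u'\<in>U. r u u')"

definition best_response :: "'u set \<Rightarrow> ('u \<Rightarrow> real) \<Rightarrow> 'u \<Rightarrow> bool" where
  "best_response U p u \<longleftrightarrow> (\<forall>v\<in>U. p v \<le> p u)"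

lemma sum_revision_flow:
  "(\<Sum>s\<in>S. revision_flow U (z s) r u) = revision_flow U (\<lambda>u'. \<Sum>s\<in>S. z s u') r u"
  by (simp add: revision_flow_def sum_subtractf sum_distrib_right sum.swap[of _ S])

lemma revision_flow_cong:
  assumes "\<And>w v. w \<in> U \<Longrightarrow> v \<in> U \<Longrightarrow> r w v = r' w v" "u \<in> U"
  shows "revision_flow U z r u = revision_flow U z r' u"
  using assms by (simp add: revision_flow_def)

lemma revision_flow_eq_0_if_best_rates_vanish:
  assumes "\<And>w. w \<in> U \<Longrightarrow> z w \<noteq> 0 \<Longrightarrow> best_response U p w"
    and "\<And>w v. w \<in> U \<Longrightarrow> v \<in> U \<Longrightarrow> best_response U p w \<Longrightarrow> r w v = 0"
    and "u \<in> U"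
  shows "revision_flow U z r u = 0"
proof -
  have "z w * r w u = 0" if "w \<in> U" for w
    using assms that by (cases "z w = 0") auto
  moreover have "z u * (\<Sum>w\<in>U. r u w) = 0"
    using assms by (cases "z u = 0") auto
  ultimately show ?thesis
    by (simp add: revision_flow_def sum.neutral)
qed

lemma pairwise_comparison_rest_used_best_response:
  assumes "finite U"
    and x_nonneg: "\<And>w. w \<in> U \<Longrightarrow> x w \<ge> 0"
    and r_nonneg: "\<And>w v. w \<in> U \<Longrightarrow> v \<in> U \<Longrightarrow> r w v \<ge> 0"
    and r_pos_iff: "\<And>w v. w \<in> U \<Longrightarrow> v \<in> U \<Longrightarrow> r w v > 0 \<longleftrightarrow> p v > p w"
    and rest: "\<And>w. w \<in> U \<Longrightarrow> revision_flow U x r w = 0"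
    and "u \<in> U" "x u > 0"
  shows "best_response U p u"
  unfolding best_response_def
proof (rule ccontr)
  assume "\<not> (\<forall>v\<in>U. p v \<le> p u)"
  then obtain v where v: "v \<in> U" "p u < p v" by (auto simp: not_le)
  define W where "W = {w\<in>U. x w > 0}"
  have "finite W" "W \<noteq> {}" using assms by (auto simp: W_def)
  then have "Min (p ` W) \<in> p ` W" by (intro Min_in) auto
  then obtain w where w: "w \<in> W" "p w = Min (p ` W)" by auto
  have w_min: "p w \<le> p w'" if "w' \<in> W" for w'
    using w \<open>finite W\<close> that by simp
  \<comment> \<open>the worst used policy receives no inflow but loses mass towards the better policy v\<close>
  have "x w' * r w' w = 0" if "w' \<in> U" for w'
    using w w_min[of w'] r_pos_iff[of w' w] r_nonneg[of w' w] x_nonneg[of w'] that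
    by (cases "x w' > 0") (auto simp: W_def less_le)
  hence inflow: "(\<Sum>w'\<in>U. x w' * r w' w) = 0" by (simp add: sum.neutral)
  have "r w v > 0" using r_pos_iff[of w v] w w_min[of u] assms(6,7) v by (auto simp: W_def)
  hence "(\<Sum>v'\<in>U. r w v') > 0"
    using sum_pos2[OF \<open>finite U\<close> v(1), of "r w"] r_nonneg w by (auto simp: W_def)
  with w have "revision_flow U x r w < 0"
    by (simp add: revision_flow_def inflow W_def)
  with rest w show False by (simp add: W_def)
qed

lemma sum_abs_diff_fun_upd2:
  fixes y :: "'u \<Rightarrow> real"
  assumes "finite U" "u \<in> U" "w \<in> U" "u \<noteq> w" "y u = 0" "y w = 0" "e \<ge> 0" "K \<ge> 0"
  shows "(\<Sum>v\<in>U. \<bar>y v - (y(u := e, w := - (K * e))) v\<bar>) = (1 + K) * e"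
proof -
  have "(\<Sum>v\<in>U. \<bar>y v - (y(u := e, w := - (K * e))) v\<bar>)
      = (\<Sum>v\<in>U. (if v = u then e else 0) + (if v = w then K * e else 0))"
    using assms by (intro sum.cong) auto
  also have "\<dots> = (1 + K) * e"
    using assms by (simp add: sum.distrib algebra_simps)
  finally show ?thesis .
qed

lemma sum_mult_fun_upd2_le:
  fixes y t :: "'u \<Rightarrow> real"
  assumes "finite U" "u \<in> U" "w \<in> U" "u \<noteq> w"
    and "\<And>v. v \<in> U \<Longrightarrow> t v \<ge> 0" "\<And>v. v \<in> U \<Longrightarrow> y v \<le> 0"
  shows "(\<Sum>v\<in>U. t v * (y(u := e, w := - (K * e))) v) \<le> e * (t u - K * t w)"
proof -
  have "(\<Sum>v\<in>U. t v * (y(u := e, w := - (K * e))) v)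
      \<le> (\<Sum>v\<in>U. (if v = u then t u * e else 0) + (if v = w then - (K * e * t w) else 0))"
    using assms by (intro sum_mono) (auto simp: mult_nonneg_nonpos)
  also have "\<dots> = e * (t u - K * t w)"
    using assms by (simp add: sum.distrib algebra_simps)
  finally show ?thesis .
qed

lemma excess_rates_unique_at_zero_excess:
  fixes tau :: "('u \<Rightarrow> real) \<Rightarrow> 'u \<Rightarrow> real"
  assumes "finite U"
    and Lip: "\<forall>y y'. \<forall>v\<in>U. \<bar>tau y v - tau y' v\<bar> \<le> L * (\<Sum>w\<in>U. \<bar>y w - y' w\<bar>)"
    and tau_nonneg: "\<forall>y. \<forall>v\<in>U. tau y v \<ge> 0"
    and pos_corr: "\<forall>y. (\<exists>v\<in>U. y v > 0) \<longrightarrow> (\<Sum>v\<in>U. tau y v * y v) > 0"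
    and y_nonpos: "\<And>v. v \<in> U \<Longrightarrow> y v \<le> 0"
    and u: "u \<in> U" "y u = 0" "tau y u > 0"
    and w: "w \<in> U" "y w = 0" "tau y w > 0"
  shows "u = w"
proof (rule ccontr)
  assume "u \<noteq> w"
  \<comment> \<open>Raise the excess payoff of u to e and lower that of w to -K e: for small e the correlation
    of the rates with the new excess payoffs is about e (tau y u - K tau y w) < 0.\<close>
  define a where "a = tau y u"
  define b where "b = tau y w"
  define K where "K = 2 * a / b"
  define C where "C = (\<bar>L\<bar> + 1) * (1 + K)"
  define e where "e = a / (2 * ((1 + K) * C))"
  have "a > 0" "b > 0" using u w by (auto simp: a_def b_def)
  hence K: "K > 0" "K * b = 2 * a" by (auto simp: K_def)
  hence C: "C > 0" by (simp add: C_def add_pos_nonneg)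
  hence e: "e > 0" "(1 + K) * C * e = a / 2"
    using \<open>a > 0\<close> K by (auto simp: e_def)
  define y' where "y' = y(u := e, w := - (K * e))"
  have close: "\<bar>tau y v - tau y' v\<bar> \<le> C * e" if "v \<in> U" for v
  proof -
    have "\<bar>tau y v - tau y' v\<bar> \<le> L * ((1 + K) * e)"
      using Lip that sum_abs_diff_fun_upd2[OF \<open>finite U\<close> u(1) w(1) \<open>u \<noteq> w\<close> u(2) w(2)] K e
      unfolding y'_def by (metis less_imp_le)
    also have "\<dots> \<le> (\<bar>L\<bar> + 1) * ((1 + K) * e)"
      using K e by (intro mult_right_mono) auto
    finally show ?thesis by (simp add: C_def algebra_simps)
  qed
  have "y' u = e" using \<open>u \<noteq> w\<close> by (simp add: y'_def)
  with u(1) e have "\<exists>v\<in>U. y' v > 0" by auto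
  with pos_corr have "0 < (\<Sum>v\<in>U. tau y' v * y' v)" by blast
  also have "\<dots> \<le> e * (tau y' u - K * tau y' w)"
    unfolding y'_def using \<open>finite U\<close> u(1) w(1) \<open>u \<noteq> w\<close> tau_nonneg y_nonpos
    by (intro sum_mult_fun_upd2_le) auto
  also have "\<dots> \<le> e * ((a + C * e) - K * (b - C * e))"
    using close[OF u(1)] close[OF w(1)] K e
    by (intro mult_left_mono diff_mono mult_left_mono) (auto simp: a_def b_def abs_le_iff)
  also have "\<dots> = e * ((1 + K) * C * e + a - K * b)"
    by (simp add: algebra_simps)
  also have "\<dots> = - (e * a) / 2"
    unfolding e(2) K(2) by (simp add: algebra_simps)
  finally show False
    using mult_pos_pos[OF e(1) \<open>a > 0\<close>] by linarith
qed

locale excess_payoff_rest_point =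
  fixes U :: "'u set" and m :: real and x p y :: "'u \<Rightarrow> real"
    and tau :: "('u \<Rightarrow> real) \<Rightarrow> 'u \<Rightarrow> real" and L :: real
  assumes finite_U: "finite U" and m_pos: "m > 0"
    and x_nonneg: "\<And>w. w \<in> U \<Longrightarrow> x w \<ge> 0" and x_sum: "(\<Sum>w\<in>U. x w) = m"
    and Lip: "\<forall>y y'. \<forall>v\<in>U. \<bar>tau y v - tau y' v\<bar> \<le> L * (\<Sum>w\<in>U. \<bar>y w - y' w\<bar>)"
    and tau_nonneg: "\<forall>y. \<forall>v\<in>U. tau y v \<ge> 0"
    and pos_corr: "\<forall>y. (\<exists>v\<in>U. y v > 0) \<longrightarrow> (\<Sum>v\<in>U. tau y v * y v) > 0"
    and y_def: "y = (\<lambda>w. p w - (1 / m) * (\<Sum>w'\<in>U. x w' * p w'))"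
    and rest: "\<And>w. w \<in> U \<Longrightarrow> revision_flow U x (\<lambda>_. tau y) w = 0"
begin

lemma rates_proportional:
  assumes "w \<in> U"
  shows "m * tau y w = x w * (\<Sum>v\<in>U. tau y v)"
  using rest[OF assms] x_sum by (simp add: revision_flow_def sum_distrib_right[symmetric])

lemma mean_excess_eq_0: "(\<Sum>w\<in>U. x w * y w) = 0"
proof -
  have "(\<Sum>w\<in>U. x w * y w) = (\<Sum>w\<in>U. x w * p w) - (\<Sum>w\<in>U. x w) * ((1 / m) * (\<Sum>w'\<in>U. x w' * p w'))"
    by (simp add: y_def right_diff_distrib sum_subtractf sum_distrib_right sum_divide_distrib)
  then show ?thesis
    using m_pos x_sum by simp
qed

lemma excess_nonpos:
  assumes "v \<in> U"
  shows "y v \<le> 0"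
proof (rule ccontr)
  \<comment> \<open>The rates are proportional to x, so they are uncorrelated with the excess payoffs.\<close>
  have "m * (\<Sum>v\<in>U. tau y v * y v) = (\<Sum>v\<in>U. (m * tau y v) * y v)"
    by (simp add: sum_distrib_left mult.assoc)
  also have "\<dots> = (\<Sum>v\<in>U. (\<Sum>v'\<in>U. tau y v') * (x v * y v))"
  proof (rule sum.cong)
    show "m * tau y v * y v = (\<Sum>v'\<in>U. tau y v') * (x v * y v)" if "v \<in> U" for v
      unfolding rates_proportional[OF that] by (simp add: algebra_simps)
  qed simp
  also have "\<dots> = 0"
    using mean_excess_eq_0 by (simp add: sum_distrib_left[symmetric])
  finally have no_corr: "(\<Sum>v\<in>U. tau y v * y v) = 0"
    using m_pos by simp
  assume "\<not> y v \<le> 0"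
  with assms have "\<exists>w\<in>U. y w > 0" by (auto simp: not_le)
  with pos_corr no_corr show False by auto
qed

lemma excess_eq_0_if_used:
  assumes "w \<in> U" "x w > 0"
  shows "y w = 0"
proof -
  have "\<forall>w\<in>U. - (x w * y w) = 0"
    using mean_excess_eq_0 x_nonneg excess_nonpos finite_U
    by (subst sum_nonneg_eq_0_iff[symmetric]) (auto simp: sum_negf mult_nonneg_nonpos)
  with assms show ?thesis by force
qed

lemma used_best_response:
  assumes "u \<in> U" "x u > 0"
  shows "best_response U p u"
  using excess_eq_0_if_used[OF assms] excess_nonpos by (simp add: best_response_def y_def)

lemma revision_flow_eq_0:
  assumes unused: "\<And>w. w \<in> U \<Longrightarrow> x w = 0 \<Longrightarrow> z w = 0" and "u \<in> U"
  shows "revision_flow U z (\<lambda>_. tau y) u = 0"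
proof -
  \<comment> \<open>Positive rates only point to used policies, whose excess payoffs vanish, so at most one
    policy has a positive rate; hence z w * tau y u = 0 whenever w \<noteq> u.\<close>
  define T where "T = (\<Sum>v\<in>U. tau y v)"
  have used_if_rate_pos: "x v > 0" if "v \<in> U" "tau y v > 0" for v
  proof -
    have "x v * T > 0"
      using rates_proportional[OF that(1)] mult_pos_pos[OF m_pos that(2)] by (simp add: T_def)
    then show ?thesis
      using x_nonneg[OF that(1)] by (simp add: zero_less_mult_iff)
  qed
  have unique: "v = w" if "v \<in> U" "w \<in> U" "tau y v > 0" "tau y w > 0" for v w
    using that excess_nonpos excess_eq_0_if_used used_if_rate_pos
    by (intro excess_rates_unique_at_zero_excess[OF finite_U Lip tau_nonneg pos_corr, where y = y]) auto
  have cross: "z w * tau y v = 0" if "v \<in> U" "w \<in> U" "v \<noteq> w" for v w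
  proof (cases "tau y v > 0 \<and> z w \<noteq> 0")
    case True
    have "T > 0"
      using True that tau_nonneg finite_U by (auto simp: T_def intro: sum_pos2)
    moreover have "x w > 0"
      using True unused[OF that(2)] x_nonneg[OF that(2)] by (auto simp: less_le)
    ultimately have "m * tau y w > 0"
      using rates_proportional[OF that(2)] by (simp add: T_def)
    then have "tau y w > 0"
      using m_pos by (simp add: zero_less_mult_iff)
    with True unique that show ?thesis by blast
  next
    case False
    with tau_nonneg that show ?thesis by (auto simp: less_le)
  qed
  have "revision_flow U z (\<lambda>_. tau y) u = (\<Sum>w\<in>U. z w * tau y u - z u * tau y w)"
    by (simp add: revision_flow_def sum_subtractf sum_distrib_left)
  also have "\<dots> = 0"
    using cross[of u] cross[of _ u] \<open>u \<in> U\<close> by (intro sum.neutral) (metis diff_self)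
  finally show ?thesis .
qed

end

lemma imitative_rest_used_best_response:
  fixes varphi :: "real \<Rightarrow> real"
  assumes "finite U" "m > 0"
    and x_nonneg: "\<And>w. w \<in> U \<Longrightarrow> x w \<ge> 0"
    and varphi_nonpos: "\<And>d. d \<le> 0 \<Longrightarrow> varphi d = 0"
    and varphi_pos: "\<And>d. d > 0 \<Longrightarrow> varphi d > 0"
    and r: "\<And>w v. w \<in> U \<Longrightarrow> v \<in> U \<Longrightarrow> r w v = x v / m * varphi (p v - p w)"
    and rest: "\<And>w. w \<in> U \<Longrightarrow> revision_flow U x r w = 0"
    and v: "v \<in> U" "best_response U p v" "x v > 0"
    and u: "u \<in> U" "x u > 0"
  shows "best_response U p u"
proof -
  \<comment> \<open>Nobody leaves the best response v, so nobody may enter it either, although v is imitated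
    by every strictly worse used policy.\<close>
  have "varphi d \<ge> 0" for d
    using varphi_nonpos varphi_pos by (cases "d > 0") (auto simp: less_imp_le)
  hence r_nonneg: "r w w' \<ge> 0" if "w \<in> U" "w' \<in> U" for w w'
    using r[OF that] x_nonneg[OF that(2)] \<open>m > 0\<close> by simp
  have "r v w = 0" if "w \<in> U" for w
    using r[OF v(1) that] v(2) that varphi_nonpos by (simp add: best_response_def)
  hence "(\<Sum>w\<in>U. x w * r w v) = 0"
    using rest[OF v(1)] by (simp add: revision_flow_def)
  moreover have "x w * r w v \<ge> 0" if "w \<in> U" for w
    using x_nonneg r_nonneg that v(1) by simp
  ultimately have "\<forall>w\<in>U. x w * r w v = 0"
    by (simp add: sum_nonneg_eq_0_iff[OF \<open>finite U\<close>])
  hence "x u * r u v = 0"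
    using u(1) by blast
  hence "varphi (p v - p u) = 0"
    using r[OF u(1) v(1)] u(2) v(3) \<open>m > 0\<close> by simp
  hence "p v \<le> p u"
    using varphi_pos[of "p v - p u"] by linarith
  with v(2) show ?thesis
    by (auto simp: best_response_def)
qed

lemma imitation_net_gain_pos:
  fixes varphi :: "real \<Rightarrow> real"
  assumes "finite U" "m > 0"
    and x_nonneg: "\<And>w. w \<in> U \<Longrightarrow> x w \<ge> 0"
    and varphi_nonpos: "\<And>d. d \<le> 0 \<Longrightarrow> varphi d = 0"
    and varphi_pos: "\<And>d. d > 0 \<Longrightarrow> varphi d > 0"
    and "best_response U p v"
    and u: "u \<in> U" "x u > 0" "p u < p v"
  shows "(\<Sum>w\<in>U. x w / m * (varphi (p v - p w) - varphi (p w - p v))) > 0"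
proof (rule sum_pos2[OF \<open>finite U\<close> u(1)])
  show "x u / m * (varphi (p v - p u) - varphi (p u - p v)) > 0"
    using u \<open>m > 0\<close> varphi_pos[of "p v - p u"] varphi_nonpos[of "p u - p v"] by simp
  show "x w / m * (varphi (p v - p w) - varphi (p w - p v)) \<ge> 0" if "w \<in> U" for w
  proof -
    have "varphi (p w - p v) = 0"
      using that \<open>best_response U p v\<close> varphi_nonpos by (simp add: best_response_def)
    moreover have "varphi (p v - p w) \<ge> 0"
      using varphi_nonpos[of "p v - p w"] varphi_pos[of "p v - p w"] by linarith
    ultimately show ?thesis
      using x_nonneg[OF that] \<open>m > 0\<close> by (simp add: divide_nonneg_pos)
  qed
qed

lemma sum_pmass_mult:
  assumes "finite A" "pol c u s \<in> A"
  shows "(\<Sum>a\<in>A. pmass pol c u s a * t) = t"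
  using assms by (simp add: pmass_def sum_distrib_right[symmetric])

lemma sum_f_d_eq_0:
  fixes S :: "'c::finite \<Rightarrow> 's::finite set" and A :: "'c \<Rightarrow> 's \<Rightarrow> 'a::finite set"
    and mu :: "real^('c \<times> 's \<times> 'u::finite)"
  assumes phi_sum: "\<And>s' a. s' \<in> S c \<Longrightarrow> a \<in> A c s' \<Longrightarrow> (\<Sum>s\<in>S c. phi c s' a s) = 1"
    and pol_act: "\<And>s. s \<in> S c \<Longrightarrow> pol c u s \<in> A c s"
  shows "(\<Sum>s\<in>S c. f_d S A phi pol Rd mu c s u) = 0"
proof -
  have "(\<Sum>s\<in>S c. \<Sum>s'\<in>S c. \<Sum>a'\<in>A c s'. phi c s' a' s * pmass pol c u s' a' * mu $ (c, s', u))
      = (\<Sum>s'\<in>S c. \<Sum>a'\<in>A c s'. \<Sum>s\<in>S c. phi c s' a' s * pmass pol c u s' a' * mu $ (c, s', u))"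
    by (subst sum.swap) (intro sum.cong refl sum.swap)
  also have "\<dots> = (\<Sum>s'\<in>S c. \<Sum>a'\<in>A c s'. (\<Sum>s\<in>S c. phi c s' a' s) * (pmass pol c u s' a' * mu $ (c, s', u)))"
    by (simp add: sum_distrib_right mult.assoc)
  also have "\<dots> = (\<Sum>s'\<in>S c. mu $ (c, s', u))"
    using phi_sum pol_act by (simp add: sum_pmass_mult)
  finally show ?thesis
    by (simp add: f_d_def sum_subtractf sum_distrib_left[symmetric])
qed

lemma f_r_eq_revision_flow:
  "f_r S U F rho mu c s u =
     revision_flow (U c) (\<lambda>u'. mu $ (c, s, u')) (rho c (F c mu) (xdist S mu c)) u"
  by (simp add: f_r_def revision_flow_def)

lemma rest_point_revision_flow_xdist:
  fixes S :: "'c::finite \<Rightarrow> 's::finite set" and A :: "'c \<Rightarrow> 's \<Rightarrow> 'a::finite set"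
    and mu :: "real^('c \<times> 's \<times> 'u::finite)"
  assumes "rest_point S U A phi pol m Rd F rho mu"
    and phi_sum: "\<And>c s' a. s' \<in> S c \<Longrightarrow> a \<in> A c s' \<Longrightarrow> (\<Sum>s\<in>S c. phi c s' a s) = 1"
    and pol_act: "\<And>c u s. u \<in> U c \<Longrightarrow> s \<in> S c \<Longrightarrow> pol c u s \<in> A c s"
    and "u \<in> U c"
  shows "revision_flow (U c) (xdist S mu c) (rho c (F c mu) (xdist S mu c)) u = 0"
proof -
  have "(\<Sum>s\<in>S c. f_d S A phi pol Rd mu c s u + f_r S U F rho mu c s u) = 0"
    using assms(1,4) by (simp add: rest_point_def)
  moreover have "(\<Sum>s\<in>S c. f_d S A phi pol Rd mu c s u) = 0"
    using phi_sum pol_act assms(4) by (intro sum_f_d_eq_0)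
  ultimately have "(\<Sum>s\<in>S c. f_r S U F rho mu c s u) = 0"
    by (simp add: sum.distrib)
  then show ?thesis
    by (simp add: f_r_eq_revision_flow sum_revision_flow xdist_def[abs_def])
qed

lemma popX_nonneg_le_xdist:
  fixes mu :: "real^('c::finite \<times> 's::finite \<times> 'u::finite)"
  assumes "mu \<in> popX S U m" "s \<in> S c" "u \<in> U c"
  shows "0 \<le> mu $ (c, s, u)" "mu $ (c, s, u) \<le> xdist S mu c u"
proof -
  have nonneg: "0 \<le> mu $ (c, s', u)" if "s' \<in> S c" for s'
    using assms that by (simp add: popX_def)
  then show "0 \<le> mu $ (c, s, u)" using assms(2) .
  show "mu $ (c, s, u) \<le> xdist S mu c u"
    unfolding xdist_def using nonneg assms(2) by (intro member_le_sum) auto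
qed

lemma popX_policy_dist_xdist:
  fixes mu :: "real^('c::finite \<times> 's::finite \<times> 'u::finite)"
  assumes "mu \<in> popX S U m"
  shows "policy_dist (U c) (m c) (xdist S mu c)"
proof -
  have "(\<Sum>u\<in>U c. xdist S mu c u) = m c"
    using assms unfolding popX_def xdist_def by (subst sum.swap) simp
  moreover have "nonneg_on (U c) (xdist S mu c)"
    using popX_nonneg_le_xdist[OF assms] by (auto simp: nonneg_on_def xdist_def intro: sum_nonneg)
  ultimately show ?thesis
    by (simp add: policy_dist_def)
qed

definition class_in_equilibrium ::
  "('c \<Rightarrow> 's set) \<Rightarrow> ('c \<Rightarrow> 'u set) \<Rightarrow> ('c \<Rightarrow> real^('c::finite \<times> 's::finite \<times> 'u::finite) \<Rightarrow> 'u \<Rightarrow> real)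
   \<Rightarrow> ('c \<Rightarrow> ('u \<Rightarrow> real) \<Rightarrow> ('u \<Rightarrow> real) \<Rightarrow> 'u \<Rightarrow> 'u \<Rightarrow> real)
   \<Rightarrow> real^('c \<times> 's \<times> 'u) \<Rightarrow> 'c \<Rightarrow> bool" where
  "class_in_equilibrium S U F rho mu c \<longleftrightarrow>
     (\<forall>u\<in>U c. xdist S mu c u > 0 \<longrightarrow> best_response (U c) (F c mu) u) \<and>
     (\<forall>s\<in>S c. \<forall>u\<in>U c. f_r S U F rho mu c s u = 0)"

lemma MSNE_if_classes_in_equilibrium:
  assumes "rest_point S U A phi pol m Rd F rho mu"
    and "\<And>c. class_in_equilibrium S U F rho mu c"
  shows "MSNE S U A phi pol m Rd F mu"
  using assms by (simp add: MSNE_def rest_point_def class_in_equilibrium_def best_response_def)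

lemma class_in_equilibrium_if_best_rates_vanish:
  assumes "mu \<in> popX S U m"
    and used_best: "\<And>u. u \<in> U c \<Longrightarrow> xdist S mu c u > 0 \<Longrightarrow> best_response (U c) (F c mu) u"
    and best_rates: "\<And>w v. w \<in> U c \<Longrightarrow> v \<in> U c \<Longrightarrow> best_response (U c) (F c mu) w \<Longrightarrow>
                       rho c (F c mu) (xdist S mu c) w v = 0"
  shows "class_in_equilibrium S U F rho mu c"
proof -
  have "f_r S U F rho mu c s u = 0" if "s \<in> S c" "u \<in> U c" for s u
  proof -
    have "best_response (U c) (F c mu) w" if "w \<in> U c" "mu $ (c, s, w) \<noteq> 0" for w
      using popX_nonneg_le_xdist[OF assms(1) \<open>s \<in> S c\<close> that(1)] that used_best by simp
    then show ?thesis
      unfolding f_r_eq_revision_flow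
      by (rule revision_flow_eq_0_if_best_rates_vanish) (use best_rates that in auto)
  qed
  with used_best show ?thesis
    by (simp add: class_in_equilibrium_def)
qed

lemma pairwise_comparison_class_in_equilibrium:
  assumes "mu \<in> popX S U m" "protocol (U c) (rho c)" "pairwise_comparison (U c) (rho c)"
    and rest: "\<And>u. u \<in> U c \<Longrightarrow> revision_flow (U c) (xdist S mu c) (rho c (F c mu) (xdist S mu c)) u = 0"
  shows "class_in_equilibrium S U F rho mu c"
proof -
  let ?x = "xdist S mu c" and ?p = "F c mu"
  have x: "nonneg_on (U c) ?x"
    using popX_policy_dist_xdist[OF assms(1)] by (simp add: policy_dist_def)
  have r_nonneg: "\<And>w v. w \<in> U c \<Longrightarrow> v \<in> U c \<Longrightarrow> rho c ?p ?x w v \<ge> 0"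
    using assms(2) x unfolding protocol_def by blast
  have r_pos_iff: "\<And>w v. w \<in> U c \<Longrightarrow> v \<in> U c \<Longrightarrow> rho c ?p ?x w v > 0 \<longleftrightarrow> ?p v > ?p w"
    using assms(3) x unfolding pairwise_comparison_def by blast
  show ?thesis
  proof (rule class_in_equilibrium_if_best_rates_vanish[OF assms(1)])
    show "best_response (U c) ?p u" if "u \<in> U c" "?x u > 0" for u
      using r_nonneg r_pos_iff rest that x
      by (intro pairwise_comparison_rest_used_best_response[where r = "rho c ?p ?x"])
        (auto simp: nonneg_on_def)
    show "rho c ?p ?x w v = 0" if "w \<in> U c" "v \<in> U c" "best_response (U c) ?p w" for w v
      using that r_nonneg[of w v] r_pos_iff[of w v] by (force simp: best_response_def)
  qed
qed

lemma excess_payoff_class_in_equilibrium: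
  fixes mu :: "real^('c::finite \<times> 's::finite \<times> 'u::finite)"
  assumes "mu \<in> popX S U m" "m c > 0" "excess_payoff (U c) (m c) (rho c)"
    and rest: "\<And>u. u \<in> U c \<Longrightarrow> revision_flow (U c) (xdist S mu c) (rho c (F c mu) (xdist S mu c)) u = 0"
  shows "class_in_equilibrium S U F rho mu c"
proof -
  let ?x = "xdist S mu c" and ?p = "F c mu"
  define y where "y = (\<lambda>w. ?p w - (1 / m c) * (\<Sum>w'\<in>U c. ?x w' * ?p w'))"
  have x: "policy_dist (U c) (m c) ?x"
    using popX_policy_dist_xdist[OF assms(1)] .
  obtain tau :: "('u \<Rightarrow> real) \<Rightarrow> 'u \<Rightarrow> real" and L where
    Lip: "\<forall>y y'. \<forall>v\<in>U c. \<bar>tau y v - tau y' v\<bar> \<le> L * (\<Sum>w\<in>U c. \<bar>y w - y' w\<bar>)"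
    and tau_nonneg: "\<forall>y. \<forall>v\<in>U c. tau y v \<ge> 0"
    and pos_corr: "\<forall>y. (\<exists>v\<in>U c. y v > 0) \<longrightarrow> (\<Sum>v\<in>U c. tau y v * y v) > 0"
    and rates: "\<And>w v. w \<in> U c \<Longrightarrow> v \<in> U c \<Longrightarrow> rho c ?p ?x w v = tau y v"
    using assms(3) x unfolding excess_payoff_def y_def by blast
  have flow_eq: "revision_flow (U c) z (rho c ?p ?x) u = revision_flow (U c) z (\<lambda>_. tau y) u"
    if "u \<in> U c" for z u
    using rates that by (intro revision_flow_cong)
  interpret excess_payoff_rest_point "U c" "m c" ?x ?p y tau L
    using x assms(2) Lip tau_nonneg pos_corr y_def rest flow_eq
    by unfold_locales (auto simp: policy_dist_def nonneg_on_def)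
  have "f_r S U F rho mu c s u = 0" if "s \<in> S c" "u \<in> U c" for s u
  proof -
    have "mu $ (c, s, w) = 0" if "w \<in> U c" "?x w = 0" for w
      using popX_nonneg_le_xdist[OF assms(1) \<open>s \<in> S c\<close> that(1)] that(2) by simp
    then show ?thesis
      using revision_flow_eq_0 that by (simp add: f_r_eq_revision_flow flow_eq)
  qed
  with used_best_response show ?thesis
    by (simp add: class_in_equilibrium_def)
qed

lemma imitative_class_in_equilibrium:
  fixes mu :: "real^('c::finite \<times> 's::finite \<times> 'u::finite)"
  assumes "mu \<in> popX S U m" "m c > 0" "imitative_via_comparison (U c) (m c) (rho c) varphi"
    and rest: "\<And>u. u \<in> U c \<Longrightarrow> revision_flow (U c) (xdist S mu c) (rho c (F c mu) (xdist S mu c)) u = 0"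
    and v: "v \<in> U c" "best_response (U c) (F c mu) v" "xdist S mu c v > 0"
  shows "class_in_equilibrium S U F rho mu c"
proof -
  let ?x = "xdist S mu c" and ?p = "F c mu"
  have x: "policy_dist (U c) (m c) ?x"
    using popX_policy_dist_xdist[OF assms(1)] .
  have varphi_nonpos: "\<And>d. d \<le> 0 \<Longrightarrow> varphi d = 0" and varphi_pos: "\<And>d. d > 0 \<Longrightarrow> varphi d > 0"
    and rates: "\<And>w v. w \<in> U c \<Longrightarrow> v \<in> U c \<Longrightarrow> rho c ?p ?x w v = ?x v / m c * varphi (?p v - ?p w)"
    using assms(3) x unfolding imitative_via_comparison_def r_comp_def by blast+
  have x_nonneg: "\<And>w. w \<in> U c \<Longrightarrow> ?x w \<ge> 0"
    using x by (simp add: policy_dist_def nonneg_on_def)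
  show ?thesis
  proof (rule class_in_equilibrium_if_best_rates_vanish[OF assms(1)])
    show "best_response (U c) ?p u" if "u \<in> U c" "?x u > 0" for u
      by (rule imitative_rest_used_best_response
          [OF _ assms(2) x_nonneg varphi_nonpos varphi_pos rates rest v that]) simp_all
    show "rho c ?p ?x w u = 0" if "w \<in> U c" "u \<in> U c" "best_response (U c) ?p w" for w u
      using that rates varphi_nonpos by (simp add: best_response_def)
  qed
qed

lemma imitative_class_out_of_equilibrium:
  fixes mu :: "real^('c::finite \<times> 's::finite \<times> 'u::finite)"
  assumes "mu \<in> popX S U m" "m c > 0" "imitative_via_comparison (U c) (m c) (rho c) varphi"
    and rest: "\<And>u. u \<in> U c \<Longrightarrow> revision_flow (U c) (xdist S mu c) (rho c (F c mu) (xdist S mu c)) u = 0"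
    and "\<not> class_in_equilibrium S U F rho mu c"
    and v: "v \<in> U c" "best_response (U c) (F c mu) v"
  shows "xdist S mu c v = 0 \<and> G_imit S U m F varphi c v mu > 0"
proof -
  let ?x = "xdist S mu c" and ?p = "F c mu"
  have x: "policy_dist (U c) (m c) ?x"
    using popX_policy_dist_xdist[OF assms(1)] .
  have varphi_nonpos: "\<And>d. d \<le> 0 \<Longrightarrow> varphi d = 0" and varphi_pos: "\<And>d. d > 0 \<Longrightarrow> varphi d > 0"
    using assms(3) unfolding imitative_via_comparison_def by blast+
  have x_nonneg: "\<And>w. w \<in> U c \<Longrightarrow> ?x w \<ge> 0" and x_sum: "(\<Sum>w\<in>U c. ?x w) = m c"
    using x by (auto simp: policy_dist_def nonneg_on_def)
  have unused_best: "?x w = 0" if "w \<in> U c" "best_response (U c) ?p w" for w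
    using imitative_class_in_equilibrium[where F = F and U = U and c = c and m = m and rho = rho,
        OF assms(1-4) that] assms(5) x_nonneg[OF that(1)]
    by force
  have "\<exists>u\<in>U c. ?x u > 0"
  proof (rule ccontr)
    assume "\<not> (\<exists>u\<in>U c. ?x u > 0)"
    then have "(\<Sum>w\<in>U c. ?x w) \<le> 0" by (intro sum_nonpos) (auto simp: not_less)
    with x_sum \<open>m c > 0\<close> show False by simp
  qed
  then obtain u where u: "u \<in> U c" "?x u > 0" by blast
  have "\<not> best_response (U c) ?p u"
    using unused_best[of u] u by auto
  then obtain j where "j \<in> U c" "?p u < ?p j"
    by (auto simp: best_response_def not_le)
  with v(2) have worse: "?p u < ?p v"
    unfolding best_response_def by fastforce
  have "(\<Sum>w\<in>U c. ?x w / m c * (varphi (?p v - ?p w) - varphi (?p w - ?p v))) > 0"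
    by (rule imitation_net_gain_pos[where U = "U c" and x = ?x and p = ?p,
          OF _ assms(2) x_nonneg varphi_nonpos varphi_pos v(2) u worse]) simp
  with unused_best[OF v] show ?thesis
    by (simp add: G_imit_def r_comp_def)
qed

theorem mainTheorem4:
  fixes S :: "'c::finite \<Rightarrow> 's::finite set"
    and A :: "'c \<Rightarrow> 's \<Rightarrow> 'a::finite set"
    and phi :: "'c \<Rightarrow> 's \<Rightarrow> 'a \<Rightarrow> 's \<Rightarrow> real"
    and U :: "'c \<Rightarrow> 'u::finite set"
    and pol :: "'c \<Rightarrow> 'u \<Rightarrow> 's \<Rightarrow> 'a"
    and m Rd :: "'c \<Rightarrow> real"
    and F :: "'c \<Rightarrow> real^('c \<times> 's \<times> 'u) \<Rightarrow> 'u \<Rightarrow> real"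
    and rho :: "'c \<Rightarrow> ('u \<Rightarrow> real) \<Rightarrow> ('u \<Rightarrow> real) \<Rightarrow> 'u \<Rightarrow> 'u \<Rightarrow> real"
    and ImC :: "'c set"
    and varphi :: "'c \<Rightarrow> real \<Rightarrow> real"
    and mu :: "real^('c \<times> 's \<times> 'u)"
  assumes S_ne: "\<And>c. S c \<noteq> {}"
    and A_ne: "\<And>c s. s \<in> S c \<Longrightarrow> A c s \<noteq> {}"
    and phi_nonneg: "\<And>c s' a s. s' \<in> S c \<Longrightarrow> a \<in> A c s' \<Longrightarrow> s \<in> S c \<Longrightarrow> phi c s' a s \<ge> 0"
    and phi_sum: "\<And>c s' a. s' \<in> S c \<Longrightarrow> a \<in> A c s' \<Longrightarrow> (\<Sum>s\<in>S c. phi c s' a s) = 1"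
    and U_ne: "\<And>c. U c \<noteq> {}"
    and pol_act: "\<And>c u s. u \<in> U c \<Longrightarrow> s \<in> S c \<Longrightarrow> pol c u s \<in> A c s"
    and pol_inj: "\<And>c. inj_on (\<lambda>u. restrict (pol c u) (S c)) (U c)"
    and m_pos: "\<And>c. m c > 0"
    and Rd_pos: "\<And>c. Rd c > 0"
    and unichain: "\<And>c u. u \<in> U c \<Longrightarrow> unique_recurrent_class (S c) (kernel A phi pol c u)"
    and F_C1: "\<exists>Nb. open Nb \<and> popX S U m \<subseteq> Nb \<and>
                 (\<forall>c u. \<exists>D :: real^('c \<times> 's \<times> 'u) \<Rightarrow> ((real^('c \<times> 's \<times> 'u)) \<Rightarrow>\<^sub>L real).
                    (\<forall>y\<in>Nb. ((\<lambda>z. F c z u) has_derivative blinfun_apply (D y)) (at y)) \<and>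
                    continuous_on Nb D)"
    and rho_protocol: "\<And>c. protocol (U c) (rho c)"
    and ImC_ne: "ImC \<noteq> {}"
    and ImC_prot: "\<And>c. c \<in> ImC \<Longrightarrow> imitative_via_comparison (U c) (m c) (rho c) (varphi c)"
    and other_prot: "\<And>c. c \<notin> ImC \<Longrightarrow>
                        excess_payoff (U c) (m c) (rho c) \<or> pairwise_comparison (U c) (rho c)"
    and rest: "rest_point S U A phi pol m Rd F rho mu"
    and not_NE: "\<not> MSNE S U A phi pol m Rd F mu"
  shows "\<exists>d\<in>ImC. \<forall>v\<in>U d. (\<forall>j\<in>U d. F d mu j \<le> F d mu v) \<longrightarrow>
            xdist S mu d v = 0 \<and> G_imit S U m F (varphi d) d v mu > 0"
proof -
  have mu_X: "mu \<in> popX S U m"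
    using rest by (simp add: rest_point_def)
  have flow: "revision_flow (U c) (xdist S mu c) (rho c (F c mu) (xdist S mu c)) u = 0"
    if "u \<in> U c" for c u
    using rest phi_sum pol_act that by (rule rest_point_revision_flow_xdist)
  have "class_in_equilibrium S U F rho mu c" if "c \<notin> ImC" for c
    using other_prot[OF that]
  proof
    assume "excess_payoff (U c) (m c) (rho c)"
    then show ?thesis
      using excess_payoff_class_in_equilibrium mu_X m_pos flow by blast
  next
    assume "pairwise_comparison (U c) (rho c)"
    then show ?thesis
      using pairwise_comparison_class_in_equilibrium mu_X rho_protocol flow by blast
  qed
  moreover obtain d where out: "\<not> class_in_equilibrium S U F rho mu d"
    using MSNE_if_classes_in_equilibrium[OF rest] not_NE by blast
  ultimately have "d \<in> ImC" by blast
  then show ?thesis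
    using imitative_class_out_of_equilibrium[OF mu_X m_pos ImC_prot flow out]
    by (auto simp: best_response_def)
qed

end
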